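(* Suppose Assumptions 1 and 2 hold and problem (P) is feasible (equivalently $\sum_i(\underline{x}_i-\phi_i(\underline{x}_i))\le\sum_i d_i\le\sum_i(\bar{x}_i-\phi_i(\bar{x}_i))$). Consider the gradient ascent dynamics $$\dot{\lambda}=\frac{dg^m(\lambda)}{d\lambda}=\sum_{i=1}^N\Big(d_i-\hat{x}_i(\lambda)+\phi_i\big(\hat{x}_i(\lambda)\big)\Big),\qquad \lambda(0)\in\mathbb{R}.$$ Then $\lim_{t\to\infty}\lambda(t)=\lambda^*$, where $\lambda^*$ is a maximizer of $g^m$ over $\mathbb{R}$, and $(\hat{x}_1(\lambda^* ),\dots,\hat{x}_N(\lambda^* ))$ is an optimal solution of problem (P).
   Context: For $i=1,\dots,N$: $d_i\in\mathbb{R}$, $\mathcal{X}_i=[\underline{x}_i,\bar{x}_i]$ a nonempty closed interval, $f_i,\phi_i:\mathbb{R}\to\mathbb{R}$. Problem (P): minimize $\sum_{i=1}^N f_i(x_i)$ subject to $\sum_{i=1}^N d_i=\sum_{i=1}^N(x_i-\phi_i(x_i))$ and $x_i\in\mathcal{X}_i$ for all $i$. Assumption 1: for each $i$, $f_i$ and $\phi_i$ are continuously differentiable, $f_i$ is strictly convex on $\mathcal{X}_i$, $\phi_i$ is convex on $\mathcal{X}_i$, and $\phi_i'(x_i)<1$ for all $x_i\in\mathcal{X}_i$. Assumption 2: $f_i'(x_i)>0$ for all $x_i\in\mathcal{X}_i$ and all $i$. Local Lagrangian: $\mathcal{L}^r_i(x_i,\lambda)=f_i(x_i)+\lambda(d_i-x_i+\phi_i(x_i))$.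 Let $v_i(x_i)=f_i'(x_i)(1-\phi_i'(x_i))^{-1}$ on $\mathcal{X}_i$ (strictly increasing). Define for $\lambda\in\mathbb{R}$: $\hat{x}_i(\lambda)=\underline{x}_i$ if $\lambda\le v_i(\underline{x}_i)$; $\hat{x}_i(\lambda)=v_i^{-1}(\lambda)$ if $v_i(\underline{x}_i)<\lambda<v_i(\bar{x}_i)$; $\hat{x}_i(\lambda)=\bar{x}_i$ if $\lambda\ge v_i(\bar{x}_i)$. Modified dual function: $g^m(\lambda)=\sum_{i=1}^N\mathcal{L}^r_i(\hat{x}_i(\lambda),\lambda)$; its derivative is $\sum_i(d_i-\hat{x}_i(\lambda)+\phi_i(\hat{x}_i(\lambda)))$. *)

theory Defs
  imports "HOL-Analysis.Analysis"
begin

definition strictly_convex_on :: "real set \<Rightarrow> (real \<Rightarrow> real) \<Rightarrow> bool" where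
  "strictly_convex_on S f \<longleftrightarrow>
     (\<forall>x\<in>S. \<forall>y\<in>S. x \<noteq> y \<longrightarrow>
        (\<forall>u::real. 0 < u \<and> u < 1 \<longrightarrow> f (u * x + (1 - u) * y) < u * f x + (1 - u) * f y))"

definition vfun :: "(real \<Rightarrow> real) \<Rightarrow> (real \<Rightarrow> real) \<Rightarrow> real \<Rightarrow> real" where
  "vfun df dphi x = df x / (1 - dphi x)"

definition xhat :: "real \<Rightarrow> real \<Rightarrow> (real \<Rightarrow> real) \<Rightarrow> real \<Rightarrow> real" where
  "xhat lo hi v lam =
     (if lam \<le> v lo then lo
      else if v hi \<le> lam then hi
      else (THE x. lo \<le> x \<and> x \<le> hi \<and> v x = lam))"

definition lagr :: "(real \<Rightarrow> real) \<Rightarrow> (real \<Rightarrow> real) \<Rightarrow> real \<Rightarrow> real \<Rightarrow> real \<Rightarrow> real" where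
  "lagr f phi d x lam = f x + lam * (d - x + phi x)"

definition gm :: "nat \<Rightarrow> (nat \<Rightarrow> real \<Rightarrow> real) \<Rightarrow> (nat \<Rightarrow> real \<Rightarrow> real) \<Rightarrow> (nat \<Rightarrow> real \<Rightarrow> real)
                  \<Rightarrow> (nat \<Rightarrow> real \<Rightarrow> real) \<Rightarrow> (nat \<Rightarrow> real) \<Rightarrow> (nat \<Rightarrow> real) \<Rightarrow> (nat \<Rightarrow> real)
                  \<Rightarrow> real \<Rightarrow> real" where
  "gm N f phi df dphi d lo hi lam =
     (\<Sum>i=1..N. lagr (f i) (phi i) (d i)
                  (xhat (lo i) (hi i) (vfun (df i) (dphi i)) lam) lam)"

definition feasible :: "nat \<Rightarrow> (nat \<Rightarrow> real \<Rightarrow> real) \<Rightarrow> (nat \<Rightarrow> real) \<Rightarrow> (nat \<Rightarrow> real) \<Rightarrow> (nat \<Rightarrow> real)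
                        \<Rightarrow> (nat \<Rightarrow> real) \<Rightarrow> bool" where
  "feasible N phi d lo hi x \<longleftrightarrow>
     (\<forall>i\<in>{1..N}. lo i \<le> x i \<and> x i \<le> hi i) \<and>
     (\<Sum>i=1..N. d i) = (\<Sum>i=1..N. x i - phi i (x i))"

definition optimal :: "nat \<Rightarrow> (nat \<Rightarrow> real \<Rightarrow> real) \<Rightarrow> (nat \<Rightarrow> real \<Rightarrow> real) \<Rightarrow> (nat \<Rightarrow> real)
                       \<Rightarrow> (nat \<Rightarrow> real) \<Rightarrow> (nat \<Rightarrow> real) \<Rightarrow> (nat \<Rightarrow> real) \<Rightarrow> bool" where
  "optimal N f phi d lo hi x \<longleftrightarrow>
     feasible N phi d lo hi x \<and>
     (\<forall>y. feasible N phi d lo hi y \<longrightarrow> (\<Sum>i=1..N. f i (x i)) \<le> (\<Sum>i=1..N. f i (y i)))"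

end

theory Submission
  imports Defs
begin

text \<open>
  Write \<open>h(\<lambda>) = \<Sum>\<^sub>i (d\<^sub>i - x\<^sub>i(\<lambda>) + \<phi>\<^sub>i(x\<^sub>i(\<lambda>)))\<close> for the derivative of \<open>g\<^sup>m\<close>, where \<open>x\<^sub>i(\<lambda>)\<close> is the
  minimiser \<open>xhat\<close>. Convexity makes \<open>v\<^sub>i\<close> continuous and strictly increasing, so \<open>x\<^sub>i\<close> is
  the inverse of \<open>v\<^sub>i\<close> applied to \<open>\<lambda>\<close> clamped to the range of \<open>v\<^sub>i\<close>: a continuous, monotone
  map that minimises the local Lagrangian, since its derivative in \<open>x\<close> is
  \<open>(1 - \<phi>\<^sub>i'(x)) (v\<^sub>i(x) - \<lambda>)\<close>. As \<open>x - \<phi>\<^sub>i(x)\<close> is nondecreasing, \<open>h\<close> is continuous and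
  nonincreasing, and feasibility makes it change sign, so it has a zero.

  For a scalar flow \<open>\<lambda>' = h(\<lambda>)\<close> with \<open>h\<close> nonincreasing, the distance from \<open>\<lambda>(t)\<close> to any zero
  of \<open>h\<close> is nonincreasing. So the trajectory never crosses a zero, is monotone and bounded,
  and converges; by the mean value theorem its limit \<open>\<lambda>\<^sup>*\<close> is a zero of \<open>h\<close>. Then \<open>x(\<lambda>\<^sup>*)\<close>
  is feasible and minimises every local Lagrangian at \<open>\<lambda>\<^sup>*\<close>, and weak duality yields both
  its optimality and the maximality of \<open>g\<^sup>m(\<lambda>\<^sup>*)\<close>.
\<close>

section \<open>Scalar flows along a nonincreasing vector field\<close>

lemma antimono_on_tendsto_Inf:
  fixes g :: "real \<Rightarrow> 'a::{linorder_topology, conditionally_complete_linorder}"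
  assumes anti: "antimono_on {c..} g" and bdd: "bdd_below (g ` {c..})"
  shows "(g \<longlongrightarrow> Inf (g ` {c..})) at_top"
proof (rule order_tendstoI)
  fix a assume a: "a < Inf (g ` {c..})"
  show "eventually (\<lambda>t. a < g t) at_top"
  proof (rule eventually_at_top_linorderI[of c])
    fix t assume "c \<le> t"
    then have "Inf (g ` {c..}) \<le> g t"
      using bdd by (auto intro: cInf_lower)
    then show "a < g t" using a by simp
  qed
next
  fix a assume "Inf (g ` {c..}) < a"
  then obtain t0 where t0: "c \<le> t0" "g t0 < a"
    using cInf_less_iff[OF _ bdd] by auto
  show "eventually (\<lambda>t. g t < a) at_top"
  proof (rule eventually_at_top_linorderI[of t0])
    fix t assume "t0 \<le> t"
    then have "g t \<le> g t0" using monotone_onD[OF anti, of t0 t] t0(1) by simp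
    then show "g t < a" using t0(2) by simp
  qed
qed

locale antitone_flow =
  fixes h lam :: "real \<Rightarrow> real"
  assumes continuous_h: "continuous_on UNIV h"
    and antimono_h: "antimono h"
    and solution: "\<And>t. 0 \<le> t \<Longrightarrow> (lam has_real_derivative h (lam t)) (at t within {0..})"
begin

lemma DERIV_solution: "0 < t \<Longrightarrow> (lam has_real_derivative h (lam t)) (at t)"
  using solution[of t] at_within_interior[of t "{0..}"] by simp

lemma continuous_on_solution: "continuous_on {0..} lam"
  using solution by (intro DERIV_continuous_on[where D="\<lambda>t. h (lam t)"]) auto

lemma dist_equilibrium_antimono:
  assumes "h z = 0" "0 \<le> a" "a \<le> b"
  shows "\<bar>lam b - z\<bar> \<le> \<bar>lam a - z\<bar>"
proof -
  have "(lam b - z)\<^sup>2 \<le> (lam a - z)\<^sup>2"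
  proof (rule DERIV_nonpos_imp_decreasing_open[OF \<open>a \<le> b\<close>])
    fix t assume t: "a < t" "t < b"
    have "((\<lambda>t. (lam t - z)\<^sup>2) has_real_derivative 2 * (lam t - z) * h (lam t)) (at t)"
      using DERIV_solution[of t] t assms by (auto intro!: derivative_eq_intros)
    moreover have "(lam t - z) * h (lam t) \<le> 0"
      using antimonoD[OF antimono_h, of z "lam t"] antimonoD[OF antimono_h, of "lam t" z] \<open>h z = 0\<close>
      by (cases "lam t \<le> z") (auto simp: mult_nonpos_nonneg mult_nonneg_nonpos)
    ultimately show "\<exists>y. ((\<lambda>t. (lam t - z)\<^sup>2) has_real_derivative y) (at t) \<and> y \<le> 0"
      by (metis mult.assoc mult_nonneg_nonpos zero_le_numeral)
  next
    show "continuous_on {a..b} (\<lambda>t. (lam t - z)\<^sup>2)"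
      using continuous_on_subset[OF continuous_on_solution] assms
      by (intro continuous_intros) auto
  qed
  then show ?thesis by (simp add: abs_le_square_iff)
qed

lemma equilibrium_if_tendsto:
  assumes lim: "(lam \<longlongrightarrow> L) at_top"
  shows "h L = 0"
proof (rule ccontr)
  assume "h L \<noteq> 0"
  define e where "e = \<bar>h L\<bar> / 2"
  have e: "0 < e" using \<open>h L \<noteq> 0\<close> by (simp add: e_def)
  have "((\<lambda>t. h (lam t)) \<longlongrightarrow> h L) at_top"
    using continuous_h lim by (auto intro: continuous_on_tendsto_compose)
  then have "eventually (\<lambda>t. dist (h (lam t)) (h L) < e) at_top"
    using e by (rule tendstoD)
  moreover have "eventually (\<lambda>t. dist (lam t) L < 1) at_top"
    using lim by (rule tendstoD) simp
  ultimately have "eventually (\<lambda>t. dist (h (lam t)) (h L) < e \<and> dist (lam t) L < 1) at_top"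
    by (rule eventually_conj)
  then obtain T where T: "\<And>t. T \<le> t \<Longrightarrow> dist (h (lam t)) (h L) < e \<and> dist (lam t) L < 1"
    by (auto simp: eventually_at_top_linorder)
  \<comment> \<open>beyond \<open>T\<close> the speed exceeds \<open>e\<close>, so in time \<open>4 / e\<close> the trajectory moves by at least
    \<open>4\<close>, yet it stays within \<open>1\<close> of \<open>L\<close>\<close>
  define a b where "a = max T 1" and "b = max T 1 + 4 / e"
  have ab: "0 < a" "a < b" using e by (auto simp: a_def b_def)
  obtain z where z: "a < z" "z < b" "lam b - lam a = (b - a) * h (lam z)"
    using MVT2[OF \<open>a < b\<close>, of lam "\<lambda>t. h (lam t)"] DERIV_solution ab by fastforce
  have "dist (h (lam z)) (h L) < e"
    using T[of z] z(1) by (simp add: a_def)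
  then have "e \<le> \<bar>h (lam z)\<bar>"
    unfolding e_def dist_real_def by arith
  then have "(b - a) * e \<le> \<bar>lam b - lam a\<bar>"
    using ab by (simp add: z(3) abs_mult mult_left_mono)
  moreover have "(b - a) * e = 4" using e by (simp add: a_def b_def)
  moreover have "\<bar>lam b - lam a\<bar> < 2"
    using T[of a] T[of b] ab by (auto simp: a_def dist_real_def)
  ultimately show False by simp
qed

lemma tendsto_if_equilibrium_below:
  assumes "h s = 0" "s \<le> lam 0"
  shows "\<exists>L. (lam \<longlongrightarrow> L) at_top"
proof -
  have above: "s \<le> lam t" if t: "0 \<le> t" for t
  proof (rule ccontr)
    assume below: "\<not> s \<le> lam t"
    have "continuous_on {0..t} lam"
      using continuous_on_subset[OF continuous_on_solution] by auto
    then obtain t0 where "0 \<le> t0" "t0 \<le> t" "lam t0 = s"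
      using IVT2'[of lam t s 0] below t assms by auto
    with below show False
      using dist_equilibrium_antimono[of s t0 t] assms by simp
  qed
  have "lam b \<le> lam a" if ab: "0 \<le> a" "a \<le> b" for a b
  proof (rule DERIV_nonpos_imp_decreasing_open[OF \<open>a \<le> b\<close>])
    fix t assume t: "a < t" "t < b"
    have "h (lam t) \<le> 0"
      using antimonoD[OF antimono_h above[of t]] ab t assms(1) by simp
    then show "\<exists>y. (lam has_real_derivative y) (at t) \<and> y \<le> 0"
      using DERIV_solution[of t] ab t by auto
  next
    show "continuous_on {a..b} lam"
      using continuous_on_subset[OF continuous_on_solution] ab by auto
  qed
  then have "antimono_on {0..} lam"
    by (intro monotone_onI) simp
  moreover have "bdd_below (lam ` {0..})"
    using above by (intro bdd_belowI[where m=s]) auto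
  ultimately show ?thesis
    using antimono_on_tendsto_Inf by blast
qed

lemma tendsto_equilibrium:
  assumes "\<exists>z. h z = 0"
  shows "\<exists>L. (lam \<longlongrightarrow> L) at_top \<and> h L = 0"
proof -
  obtain z where z: "h z = 0" using assms by blast
  have "\<exists>L. (lam \<longlongrightarrow> L) at_top"
  proof (cases "z \<le> lam 0")
    case True
    then show ?thesis using tendsto_if_equilibrium_below z by blast
  next
    case False
    \<comment> \<open>the reflected flow has the equilibrium \<open>- z\<close> below its initial value\<close>
    interpret mirror: antitone_flow "\<lambda>x. - h (- x)" "\<lambda>t. - lam t"
    proof
      show "continuous_on UNIV (\<lambda>x. - h (- x))"
        by (intro continuous_intros continuous_on_compose2[OF continuous_h]) auto
      show "antimono (\<lambda>x. - h (- x))"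
      proof (rule antimonoI)
        fix x y :: real assume "x \<le> y"
        then show "- h (- y) \<le> - h (- x)"
          using antimonoD[OF antimono_h, of "- y" "- x"] by simp
      qed
    qed (auto intro!: derivative_eq_intros solution)
    obtain L where "((\<lambda>t. - lam t) \<longlongrightarrow> L) at_top"
      using mirror.tendsto_if_equilibrium_below[of "- z"] z False by auto
    then have "(lam \<longlongrightarrow> - L) at_top"
      using tendsto_minus by fastforce
    then show ?thesis by blast
  qed
  then show ?thesis using equilibrium_if_tendsto by blast
qed

end

section \<open>Derivatives of convex functions\<close>

lemma convex_on_if_strictly_convex_on:
  fixes f :: "real \<Rightarrow> real"
  assumes "convex S" "strictly_convex_on S f"
  shows "convex_on S f"
proof (rule convex_onI)
  fix t x y :: real assume "0 < t" "t < 1" "x \<in> S" "y \<in> S"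
  then show "f ((1 - t) *\<^sub>R x + t *\<^sub>R y) \<le> (1 - t) * f x + t * f y"
    using assms(2)[unfolded strictly_convex_on_def, rule_format, of x y "1 - t"]
    by (cases "x = y") (auto simp: algebra_simps)
qed (rule assms(1))

text \<open>Unlike \<open>convex_on_imp_above_tangent\<close>, this allows \<open>c\<close> to be an endpoint, as the
  derivative is two-sided.\<close>
lemma convex_on_Icc_above_tangent:
  fixes f :: "real \<Rightarrow> real"
  assumes conv: "convex_on {a..b} f" and c: "c \<in> {a..b}" and x: "x \<in> {a..b}"
    and deriv: "(f has_real_derivative f') (at c)"
  shows "f' * (x - c) \<le> f x - f c"
proof -
  define g where "g t = f (c + t * (x - c))" for t
  have "((\<lambda>t. c + t * (x - c)) has_real_derivative x - c) (at 0)"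
    by (auto intro!: derivative_eq_intros)
  moreover have "(f has_real_derivative f') (at (c + 0 * (x - c)))"
    using deriv by simp
  ultimately have "(g has_real_derivative f' * (x - c)) (at 0)"
    unfolding g_def by (rule DERIV_chain2[rotated])
  then have "((\<lambda>t. (g t - g 0) / t) \<longlongrightarrow> f' * (x - c)) (at 0)"
    unfolding has_field_derivative_iff by simp
  then have "((\<lambda>t. (g t - g 0) / t) \<longlongrightarrow> f' * (x - c)) (at_right 0)"
    by (rule tendsto_mono[rotated]) (simp add: at_le)
  moreover have "eventually (\<lambda>t. (g t - g 0) / t \<le> f x - f c) (at_right 0)"
    using eventually_at_right_real[of 0 1]
  proof (rule eventually_mono)
    fix t :: real assume t: "t \<in> {0<..<1}"
    have "g t = f ((1 - t) *\<^sub>R c + t *\<^sub>R x)"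
      by (simp add: g_def algebra_simps)
    also have "\<dots> \<le> (1 - t) * f c + t * f x"
      using t c x by (intro convex_onD[OF conv]) auto
    finally have "g t - g 0 \<le> (f x - f c) * t"
      by (simp add: g_def algebra_simps)
    then show "(g t - g 0) / t \<le> f x - f c"
      using t by (simp add: pos_divide_le_eq)
  qed simp
  ultimately show ?thesis
    by (rule tendsto_upperbound) simp
qed

lemma convex_on_Icc_deriv_mono:
  fixes f :: "real \<Rightarrow> real"
  assumes "convex_on {lo..hi} f" "\<And>x. (f has_real_derivative f' x) (at x)"
    and "lo \<le> a" "a \<le> b" "b \<le> hi"
  shows "f' a \<le> f' b"
proof -
  have "f' a * (b - a) \<le> f b - f a" "f' b * (a - b) \<le> f a - f b"
    using assms by (auto intro!: convex_on_Icc_above_tangent)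
  then have "f' a * (b - a) \<le> f' b * (b - a)" by (simp add: algebra_simps)
  then show ?thesis using assms(4) by (cases "a = b") (auto simp: mult_le_cancel_right)
qed

lemma strictly_convex_on_Icc_deriv_strict_mono:
  fixes f :: "real \<Rightarrow> real"
  assumes strict: "strictly_convex_on {lo..hi} f" and deriv: "\<And>x. (f has_real_derivative f' x) (at x)"
    and "lo \<le> a" "a < b" "b \<le> hi"
  shows "f' a < f' b"
proof -
  define m where "m = (a + b) / 2"
  have conv: "convex_on {lo..hi} f"
    using strict by (simp add: convex_on_if_strictly_convex_on)
  have "f (1/2 * a + (1 - 1/2) * b) < 1/2 * f a + (1 - 1/2) * f b"
    using assms by (intro strict[unfolded strictly_convex_on_def, rule_format]) auto
  then have mid: "2 * f m < f a + f b" by (simp add: m_def field_simps)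
  have "m \<in> {lo..hi}" using assms by (simp add: m_def)
  then have "f' a * (m - a) \<le> f m - f a" "f' b * (m - b) \<le> f m - f b"
    using assms by (auto intro!: convex_on_Icc_above_tangent[OF conv _ _ deriv])
  moreover have "m - a = (b - a) / 2" "m - b = - ((b - a) / 2)"
    by (simp_all add: m_def field_simps)
  ultimately have "(f' a - f' b) * ((b - a) / 2) < 0"
    using mid by (simp add: left_diff_distrib)
  then show ?thesis using \<open>a < b\<close> by (simp add: mult_less_0_iff)
qed

section \<open>Clamped inverses and the local problems\<close>

locale clamped_inverse =
  fixes lo hi :: real and v :: "real \<Rightarrow> real"
  assumes lo_le_hi: "lo \<le> hi"
    and continuous_v: "continuous_on {lo..hi} v"
    and strict_mono_v: "strict_mono_on {lo..hi} v"
begin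

abbreviation "xh \<equiv> xhat lo hi v"

lemma inj_on_v: "inj_on v {lo..hi}"
  using strict_mono_v by (rule strict_mono_on_imp_inj_on)

lemma image_v: "v ` {lo..hi} = {v lo..v hi}"
proof
  show "v ` {lo..hi} \<subseteq> {v lo..v hi}"
  proof
    fix y assume "y \<in> v ` {lo..hi}"
    then obtain x where "x \<in> {lo..hi}" "y = v x" by blast
    then show "y \<in> {v lo..v hi}"
      using strict_mono_on_leD[OF strict_mono_v, of lo x] strict_mono_on_leD[OF strict_mono_v, of x hi]
      by auto
  qed
  show "{v lo..v hi} \<subseteq> v ` {lo..hi}"
  proof
    fix y assume "y \<in> {v lo..v hi}"
    then obtain x where "lo \<le> x" "x \<le> hi" "v x = y"
      using IVT'[OF _ _ lo_le_hi continuous_v] by auto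
    then show "y \<in> v ` {lo..hi}" by auto
  qed
qed

lemma xhat_eq_the_inv_into: "xh \<mu> = the_inv_into {lo..hi} v (max (v lo) (min \<mu> (v hi)))"
  using lo_le_hi the_inv_into_f_f[OF inj_on_v] inj_onD[OF inj_on_v, of lo hi]
    strict_mono_on_leD[OF strict_mono_v, of lo hi]
  by (auto simp: xhat_def the_inv_into_def max_def min_def)

lemma v_lo_le_v_hi: "v lo \<le> v hi"
  using strict_mono_on_leD[OF strict_mono_v, of lo hi] lo_le_hi by simp

lemma xhat_eq_lo: "\<mu> \<le> v lo \<Longrightarrow> xh \<mu> = lo"
  by (simp add: xhat_def)

lemma xhat_eq_hi: "v hi \<le> \<mu> \<Longrightarrow> xh \<mu> = hi"
  using v_lo_le_v_hi lo_le_hi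
  by (simp add: xhat_eq_the_inv_into max_def the_inv_into_f_f[OF inj_on_v])

lemma xhat_mem: "xh \<mu> \<in> {lo..hi}"
  unfolding xhat_eq_the_inv_into using v_lo_le_v_hi
  by (intro the_inv_into_into[OF inj_on_v]) (auto simp: image_v)

lemma v_xhat: "v (xh \<mu>) = max (v lo) (min \<mu> (v hi))"
  unfolding xhat_eq_the_inv_into using v_lo_le_v_hi
  by (intro f_the_inv_into_f[OF inj_on_v]) (auto simp: image_v)

lemma less_v_if_xhat_less:
  assumes "y \<in> {lo..hi}" "xh \<mu> < y"
  shows "\<mu> < v y"
proof -
  have "v (xh \<mu>) < v y" "v y \<le> v hi"
    using assms xhat_mem lo_le_hi
    by (auto intro: strict_mono_onD[OF strict_mono_v] strict_mono_on_leD[OF strict_mono_v])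
  then show ?thesis unfolding v_xhat by linarith
qed

lemma v_less_if_less_xhat:
  assumes "y \<in> {lo..hi}" "y < xh \<mu>"
  shows "v y < \<mu>"
proof -
  have "v y < v (xh \<mu>)" "v lo \<le> v y"
    using assms xhat_mem lo_le_hi
    by (auto intro: strict_mono_onD[OF strict_mono_v] strict_mono_on_leD[OF strict_mono_v])
  then show ?thesis unfolding v_xhat by linarith
qed

lemma mono_xhat: "mono xh"
proof
  fix \<mu> \<nu> :: real assume "\<mu> \<le> \<nu>"
  show "xh \<mu> \<le> xh \<nu>"
  proof (rule ccontr)
    assume "\<not> xh \<mu> \<le> xh \<nu>"
    then have "v (xh \<nu>) < v (xh \<mu>)"
      using xhat_mem by (auto intro: strict_mono_onD[OF strict_mono_v])
    then show False
      using \<open>\<mu> \<le> \<nu>\<close> unfolding v_xhat by linarith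
  qed
qed

lemma continuous_on_xhat: "continuous_on UNIV xh"
proof -
  have "continuous_on (v ` {lo..hi}) (the_inv_into {lo..hi} v)"
    using continuous_v inj_on_v by (intro continuous_on_inv) (auto simp: the_inv_into_f_f)
  then have "continuous_on {v lo..v hi} (the_inv_into {lo..hi} v)"
    by (simp add: image_v)
  moreover have "continuous_on UNIV (\<lambda>\<mu>. max (v lo) (min \<mu> (v hi)))"
    by (intro continuous_intros)
  ultimately show ?thesis
    unfolding xhat_eq_the_inv_into
    by (rule continuous_on_compose2) (use v_lo_le_v_hi in auto)
qed

end

locale agent =
  fixes f phi df dphi :: "real \<Rightarrow> real" and lo hi :: real
  assumes lo_le_hi: "lo \<le> hi"
    and f_deriv: "\<And>x. (f has_real_derivative df x) (at x)"
    and phi_deriv: "\<And>x. (phi has_real_derivative dphi x) (at x)"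
    and continuous_df: "continuous_on UNIV df"
    and continuous_dphi: "continuous_on UNIV dphi"
    and strictly_convex_f: "strictly_convex_on {lo..hi} f"
    and convex_phi: "convex_on {lo..hi} phi"
    and dphi_less_1: "\<And>x. x \<in> {lo..hi} \<Longrightarrow> dphi x < 1"
    and df_pos: "\<And>x. x \<in> {lo..hi} \<Longrightarrow> 0 < df x"
begin

lemma strict_mono_on_vfun: "strict_mono_on {lo..hi} (vfun df dphi)"
proof (rule strict_mono_onI)
  fix a b assume ab: "a \<in> {lo..hi}" "b \<in> {lo..hi}" "a < b"
  have "dphi a \<le> dphi b"
    using ab by (intro convex_on_Icc_deriv_mono[OF convex_phi phi_deriv]) auto
  moreover have "df a < df b"
    using ab by (intro strictly_convex_on_Icc_deriv_strict_mono[OF strictly_convex_f f_deriv]) auto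
  moreover have "0 < 1 - dphi b" "0 < df a"
    using ab dphi_less_1 df_pos by auto
  ultimately have "df a / (1 - dphi a) \<le> df a / (1 - dphi b)" "df a / (1 - dphi b) < df b / (1 - dphi b)"
    by (auto intro: divide_left_mono divide_strict_right_mono)
  then show "vfun df dphi a < vfun df dphi b"
    unfolding vfun_def by linarith
qed

lemma continuous_on_vfun: "continuous_on {lo..hi} (vfun df dphi)"
  unfolding vfun_def using dphi_less_1
  by (intro continuous_intros continuous_on_subset[OF continuous_df]
      continuous_on_subset[OF continuous_dphi]) force+

sublocale clamped_inverse lo hi "vfun df dphi"
  using lo_le_hi continuous_on_vfun strict_mono_on_vfun by unfold_locales

lemma mono_on_diff_phi: "mono_on {lo..hi} (\<lambda>x. x - phi x)"
proof (rule mono_onI)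
  fix a b assume ab: "a \<in> {lo..hi}" "b \<in> {lo..hi}" "a \<le> b"
  show "a - phi a \<le> b - phi b"
  proof (rule DERIV_nonneg_imp_increasing_open[OF \<open>a \<le> b\<close>])
    fix x assume "a < x" "x < b"
    then have "0 \<le> 1 - dphi x" using ab dphi_less_1[of x] by auto
    then show "\<exists>y. ((\<lambda>x. x - phi x) has_real_derivative y) (at x) \<and> 0 \<le> y"
      using phi_deriv[of x] by (auto intro!: derivative_eq_intros)
  next
    show "continuous_on {a..b} (\<lambda>x. x - phi x)"
      using phi_deriv DERIV_isCont by (intro continuous_intros continuous_at_imp_continuous_on) blast
  qed
qed

lemma lagr_xhat_le:
  assumes y: "y \<in> {lo..hi}"
  shows "lagr f phi d (xh \<mu>) \<mu> \<le> lagr f phi d y \<mu>"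
proof -
  define F where "F x = lagr f phi d x \<mu>" for x
  have F': "(F has_real_derivative df x - \<mu> * (1 - dphi x)) (at x)" for x
    unfolding F_def lagr_def using f_deriv phi_deriv
    by (auto intro!: derivative_eq_intros simp: algebra_simps)
  then have continuous_F: "continuous_on {a..b} F" for a b
    using DERIV_isCont by (blast intro: continuous_at_imp_continuous_on)
  have F'_eq: "df x - \<mu> * (1 - dphi x) = (1 - dphi x) * (vfun df dphi x - \<mu>)" if "x \<in> {lo..hi}" for x
    using dphi_less_1[OF that] by (simp add: vfun_def field_simps)
  show ?thesis
  proof (cases "xh \<mu> \<le> y")
    case True
    have "F (xh \<mu>) \<le> F y"
    proof (rule DERIV_nonneg_imp_increasing_open[OF True _ continuous_F])
      fix x assume x: "xh \<mu> < x" "x < y"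
      then have "x \<in> {lo..hi}" using xhat_mem[of \<mu>] y by auto
      then have "0 \<le> df x - \<mu> * (1 - dphi x)"
        using F'_eq less_v_if_xhat_less[of x \<mu>] x dphi_less_1[of x] by simp
      then show "\<exists>y. (F has_real_derivative y) (at x) \<and> 0 \<le> y" using F' by blast
    qed
    then show ?thesis by (simp add: F_def)
  next
    case False
    have "F y \<ge> F (xh \<mu>)"
    proof (rule DERIV_nonpos_imp_decreasing_open[of y "xh \<mu>" F, OF _ _ continuous_F])
      show "y \<le> xh \<mu>" using False by simp
      fix x assume x: "y < x" "x < xh \<mu>"
      then have "x \<in> {lo..hi}" using xhat_mem[of \<mu>] y by auto
      then have "df x - \<mu> * (1 - dphi x) \<le> 0"
        using F'_eq v_less_if_less_xhat[of x \<mu>] x dphi_less_1[of x]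
        by (simp add: mult_nonneg_nonpos)
      then show "\<exists>y. (F has_real_derivative y) (at x) \<and> y \<le> 0" using F' by blast
    qed
    then show ?thesis by (simp add: F_def)
  qed
qed

end

section \<open>Lagrangian duality for the allocation problem\<close>

lemma sum_lagr:
  "(\<Sum>i\<in>I. lagr (f i) (phi i) (d i) (x i) \<mu>)
     = (\<Sum>i\<in>I. f i (x i)) + \<mu> * (\<Sum>i\<in>I. d i - x i + phi i (x i))"
  unfolding lagr_def sum_distrib_left by (rule sum.distrib)

lemma feasible_iff:
  "feasible N phi d lo hi x \<longleftrightarrow>
     (\<forall>i\<in>{1..N}. x i \<in> {lo i..hi i}) \<and> (\<Sum>i=1..N. d i - x i + phi i (x i)) = 0"
  by (auto simp: feasible_def sum.distrib sum_subtractf)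

locale allocation_problem =
  fixes N :: nat and f phi df dphi :: "nat \<Rightarrow> real \<Rightarrow> real" and d lo hi :: "nat \<Rightarrow> real"
  assumes agent: "\<And>i. i \<in> {1..N} \<Longrightarrow> agent (f i) (phi i) (df i) (dphi i) (lo i) (hi i)"
begin

abbreviation xopt :: "nat \<Rightarrow> real \<Rightarrow> real" where
  "xopt i \<equiv> xhat (lo i) (hi i) (vfun (df i) (dphi i))"

definition dual_gradient :: "real \<Rightarrow> real" where
  "dual_gradient \<mu> = (\<Sum>i=1..N. d i - xopt i \<mu> + phi i (xopt i \<mu>))"

lemma xopt_mem: "i \<in> {1..N} \<Longrightarrow> xopt i \<mu> \<in> {lo i..hi i}"
proof -
  assume "i \<in> {1..N}"
  then interpret agent "f i" "phi i" "df i" "dphi i" "lo i" "hi i" by (rule agent)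
  show ?thesis by (rule xhat_mem)
qed

lemma lagr_xopt_le:
  assumes "i \<in> {1..N}" "y \<in> {lo i..hi i}"
  shows "lagr (f i) (phi i) (d i) (xopt i \<mu>) \<mu> \<le> lagr (f i) (phi i) (d i) y \<mu>"
proof -
  interpret agent "f i" "phi i" "df i" "dphi i" "lo i" "hi i" using agent assms(1) .
  show ?thesis using assms(2) by (rule lagr_xhat_le)
qed

lemma gm_eq: "gm N f phi df dphi d lo hi \<mu> = (\<Sum>i=1..N. f i (xopt i \<mu>)) + \<mu> * dual_gradient \<mu>"
  unfolding gm_def dual_gradient_def by (rule sum_lagr)

lemma gm_le_sum_lagr:
  assumes "\<forall>i\<in>{1..N}. x i \<in> {lo i..hi i}"
  shows "gm N f phi df dphi d lo hi \<mu> \<le> (\<Sum>i=1..N. lagr (f i) (phi i) (d i) (x i) \<mu>)"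
  unfolding gm_def using assms by (intro sum_mono lagr_xopt_le) auto

lemma continuous_on_dual_gradient: "continuous_on UNIV dual_gradient"
proof -
  have "continuous_on UNIV (\<lambda>\<mu>. d i - xopt i \<mu> + phi i (xopt i \<mu>))" if "i \<in> {1..N}" for i
  proof -
    interpret agent "f i" "phi i" "df i" "dphi i" "lo i" "hi i" using agent[OF that] .
    have "continuous_on UNIV (phi i)"
      using phi_deriv DERIV_isCont by (blast intro: continuous_at_imp_continuous_on)
    then have "continuous_on UNIV (\<lambda>\<mu>. phi i (xopt i \<mu>))"
      using continuous_on_compose2[OF _ continuous_on_xhat] by blast
    then show ?thesis
      using continuous_on_xhat by (intro continuous_intros)
  qed
  then show ?thesis
    unfolding dual_gradient_def by (intro continuous_on_sum) auto
qed

lemma mono_xopt: "i \<in> {1..N} \<Longrightarrow> mono (xopt i)"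
proof -
  assume "i \<in> {1..N}"
  then interpret agent "f i" "phi i" "df i" "dphi i" "lo i" "hi i" by (rule agent)
  show ?thesis by (rule mono_xhat)
qed

lemma diff_phi_mono:
  assumes "i \<in> {1..N}" "lo i \<le> y" "y \<le> z" "z \<le> hi i"
  shows "y - phi i y \<le> z - phi i z"
proof -
  interpret agent "f i" "phi i" "df i" "dphi i" "lo i" "hi i" using agent assms(1) .
  show ?thesis using assms by (intro mono_onD[OF mono_on_diff_phi]) auto
qed

lemma antimono_dual_gradient: "antimono dual_gradient"
proof
  fix \<mu> \<nu> :: real assume "\<mu> \<le> \<nu>"
  have "xopt i \<mu> - phi i (xopt i \<mu>) \<le> xopt i \<nu> - phi i (xopt i \<nu>)" if "i \<in> {1..N}" for i
    using that xopt_mem[OF that] monoD[OF mono_xopt[OF that] \<open>\<mu> \<le> \<nu>\<close>]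
    by (intro diff_phi_mono) auto
  then show "dual_gradient \<nu> \<le> dual_gradient \<mu>"
    unfolding dual_gradient_def by (intro sum_mono) (simp add: algebra_simps)
qed

lemma xopt_extremes:
  obtains a b where "a \<le> b" "\<And>i. i \<in> {1..N} \<Longrightarrow> xopt i a = lo i"
    "\<And>i. i \<in> {1..N} \<Longrightarrow> xopt i b = hi i"
proof -
  obtain a where a: "\<And>i. i \<in> {1..N} \<Longrightarrow> a \<le> vfun (df i) (dphi i) (lo i)"
    using bdd_below_finite[of "(\<lambda>i. vfun (df i) (dphi i) (lo i)) ` {1..N}"]
    by (force simp: bdd_below_def)
  obtain b where b: "\<And>i. i \<in> {1..N} \<Longrightarrow> vfun (df i) (dphi i) (hi i) \<le> b"
    using bdd_above_finite[of "(\<lambda>i. vfun (df i) (dphi i) (hi i)) ` {1..N}"]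
    by (force simp: bdd_above_def)
  have "xopt i a = lo i" "xopt i (max a b) = hi i" if "i \<in> {1..N}" for i
  proof -
    interpret agent "f i" "phi i" "df i" "dphi i" "lo i" "hi i" using agent that .
    show "xopt i a = lo i" "xopt i (max a b) = hi i"
      using a[OF that] b[OF that] by (auto intro: xhat_eq_lo xhat_eq_hi)
  qed
  then show thesis by (intro that[of a "max a b"]) auto
qed

lemma dual_gradient_has_zero:
  assumes "\<exists>x. feasible N phi d lo hi x"
  shows "\<exists>\<mu>. dual_gradient \<mu> = 0"
proof -
  obtain x where "feasible N phi d lo hi x" using assms by blast
  then have x_mem: "\<And>i. i \<in> {1..N} \<Longrightarrow> x i \<in> {lo i..hi i}"
    and x_sum: "(\<Sum>i=1..N. d i - x i + phi i (x i)) = 0"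
    by (auto simp: feasible_iff)
  obtain a b where "a \<le> b" and a: "\<And>i. i \<in> {1..N} \<Longrightarrow> xopt i a = lo i"
    and b: "\<And>i. i \<in> {1..N} \<Longrightarrow> xopt i b = hi i"
    using xopt_extremes by blast
  have x_between: "lo i - phi i (lo i) \<le> x i - phi i (x i)" "x i - phi i (x i) \<le> hi i - phi i (hi i)"
    if "i \<in> {1..N}" for i
    using x_mem[OF that] by (auto intro: diff_phi_mono[OF that])
  have "dual_gradient a = (\<Sum>i=1..N. d i - lo i + phi i (lo i))"
    unfolding dual_gradient_def by (intro sum.cong) (auto simp: a)
  also have "\<dots> \<ge> (\<Sum>i=1..N. d i - x i + phi i (x i))"
    using x_between by (intro sum_mono) force
  finally have "0 \<le> dual_gradient a" using x_sum by simp
  have "dual_gradient b = (\<Sum>i=1..N. d i - hi i + phi i (hi i))"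
    unfolding dual_gradient_def by (intro sum.cong) (auto simp: b)
  also have "\<dots> \<le> (\<Sum>i=1..N. d i - x i + phi i (x i))"
    using x_between by (intro sum_mono) force
  finally have "dual_gradient b \<le> 0" using x_sum by simp
  with \<open>0 \<le> dual_gradient a\<close> show ?thesis
    using IVT2'[OF _ _ \<open>a \<le> b\<close> continuous_on_subset[OF continuous_on_dual_gradient]] by auto
qed

lemma gm_eq_if_dual_gradient_zero:
  "dual_gradient \<mu> = 0 \<Longrightarrow> gm N f phi df dphi d lo hi \<mu> = (\<Sum>i=1..N. f i (xopt i \<mu>))"
  by (simp add: gm_eq)

lemma optimal_xopt_if_dual_gradient_zero:
  assumes zero: "dual_gradient \<mu> = 0"
  shows "optimal N f phi d lo hi (\<lambda>i. xopt i \<mu>)"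
  unfolding optimal_def
proof (intro conjI allI impI)
  show "feasible N phi d lo hi (\<lambda>i. xopt i \<mu>)"
    using zero xopt_mem by (simp add: feasible_iff dual_gradient_def)
  fix y assume "feasible N phi d lo hi y"
  then have "\<forall>i\<in>{1..N}. y i \<in> {lo i..hi i}" "(\<Sum>i=1..N. d i - y i + phi i (y i)) = 0"
    by (auto simp: feasible_iff)
  then show "(\<Sum>i=1..N. f i (xopt i \<mu>)) \<le> (\<Sum>i=1..N. f i (y i))"
    using gm_le_sum_lagr[of y \<mu>] gm_eq_if_dual_gradient_zero[OF zero] by (simp add: sum_lagr)
qed

lemma gm_le_if_dual_gradient_zero:
  assumes zero: "dual_gradient \<mu> = 0"
  shows "gm N f phi df dphi d lo hi \<nu> \<le> gm N f phi df dphi d lo hi \<mu>"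
proof -
  have "gm N f phi df dphi d lo hi \<nu> \<le> (\<Sum>i=1..N. lagr (f i) (phi i) (d i) (xopt i \<mu>) \<nu>)"
    using xopt_mem by (intro gm_le_sum_lagr) auto
  also have "\<dots> = gm N f phi df dphi d lo hi \<mu>"
    unfolding sum_lagr gm_eq_if_dual_gradient_zero[OF zero] using zero by (simp add: dual_gradient_def)
  finally show ?thesis .
qed

end

theorem theorem1:
  fixes N :: nat
    and f phi df dphi :: "nat \<Rightarrow> real \<Rightarrow> real"
    and d lo hi :: "nat \<Rightarrow> real"
    and lam :: "real \<Rightarrow> real"
  assumes nonempty: "\<forall>i\<in>{1..N}. lo i \<le> hi i"
    and f_deriv: "\<forall>i\<in>{1..N}. \<forall>x. (f i has_real_derivative df i x) (at x)"
    and phi_deriv: "\<forall>i\<in>{1..N}. \<forall>x. (phi i has_real_derivative dphi i x) (at x)"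
    and df_cont: "\<forall>i\<in>{1..N}. continuous_on UNIV (df i)"
    and dphi_cont: "\<forall>i\<in>{1..N}. continuous_on UNIV (dphi i)"
    and f_strict_convex: "\<forall>i\<in>{1..N}. strictly_convex_on {lo i..hi i} (f i)"
    and phi_convex: "\<forall>i\<in>{1..N}. convex_on {lo i..hi i} (phi i)"
    and dphi_lt1: "\<forall>i\<in>{1..N}. \<forall>x\<in>{lo i..hi i}. dphi i x < 1"
    and df_pos: "\<forall>i\<in>{1..N}. \<forall>x\<in>{lo i..hi i}. df i x > 0"
    and feas: "\<exists>x. feasible N phi d lo hi x"
    and ode: "\<forall>t\<ge>0. (lam has_real_derivative
                 (\<Sum>i=1..N. d i - xhat (lo i) (hi i) (vfun (df i) (dphi i)) (lam t)
                     + phi i (xhat (lo i) (hi i) (vfun (df i) (dphi i)) (lam t))))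
               (at t within {0..})"
  shows "\<exists>lstar. (lam \<longlongrightarrow> lstar) at_top
           \<and> (\<forall>\<mu>. gm N f phi df dphi d lo hi \<mu> \<le> gm N f phi df dphi d lo hi lstar)
           \<and> optimal N f phi d lo hi (\<lambda>i. xhat (lo i) (hi i) (vfun (df i) (dphi i)) lstar)"
proof -
  interpret allocation_problem N f phi df dphi d lo hi
    using assms by unfold_locales (unfold_locales, auto)
  interpret antitone_flow dual_gradient lam
    using continuous_on_dual_gradient antimono_dual_gradient ode
    by unfold_locales (auto simp: dual_gradient_def)
  obtain lstar where "(lam \<longlongrightarrow> lstar) at_top" "dual_gradient lstar = 0"
    using tendsto_equilibrium dual_gradient_has_zero[OF feas] by blast
  then show ?thesis
    using optimal_xopt_if_dual_gradient_zero gm_le_if_dual_gradient_zero by blast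
qed

end
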